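(* Let $n\ge1$ and $Q\in\mathcal{Q}_n$. Then $Q$ is meet-irreducible in $(\mathcal{Q}_n,\le)$ if and only if $Q\in\mathcal{P}_n$ and $Q=Q(w)$ where $w\in S_n$ is of the form $w=w(i_1,i_2,i_3,i_4)$ for some integers $i_1,i_4\ge0$, $i_2,i_3\ge1$ with $i_1+i_2+i_3+i_4=n$. In particular, no proper quasi-copula (element of $\mathcal{Q}_n\setminus\mathcal{P}_n$) is meet-irreducible in $\mathcal{Q}_n$.
   Context: Fix $n\ge1$, $L_n=\{0,\dots,n\}$. $\mathcal{Q}_n$ is the set of irreducible discrete quasi-copulas: maps $Q:L_n\times L_n\to L_n$ (onto) with $Q(i,0)=Q(0,i)=0$, $Q(i,n)=Q(n,i)=i$, non-decreasing in each argument, and $Q(i,j)+Q(i',j')\ge Q(i,j')+Q(i',j)$ whenever $i\le i'$, $j\le j'$ and one of $i,i',j,j'$ lies in $\{0,n\}$. $\mathcal{P}_n\subseteq\mathcal{Q}_n$ is the subset of those satisfying this inequality for all $i\le i'$, $j\le j'$ (irreducible discrete copulas). Order: $P\le Q$ iff $P(i,j)\le Q(i,j)$ for all $i,j$. For $w\in S_n$, $Q(w)(r,s)=|\{i\le r: w(i)\le s\}|$ (and $0$ if $r=0$ or $s=0$); every element of $\mathcal{P}_n$ is $Q(w)$ for a unique $w$. An element $z$ of a finite poset $P$ is meet-irreducible if $z$ is not the maximum of $P$ and $z=x\wedge y$ implies $z=x$ or $z=y$. For integers $i_1,i_4\ge0$, $i_2,i_3\ge1$ with $i_1+i_2+i_3+i_4=n$,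 $w(i_1,i_2,i_3,i_4)\in S_n$ is defined by $w(i)=i$ for $1\le i\le i_1$, $w(i)=i+i_3$ for $i_1+1\le i\le i_1+i_2$, $w(i)=i-i_2$ for $i_1+i_2+1\le i\le i_1+i_2+i_3$, and $w(i)=i$ for $i_1+i_2+i_3+1\le i\le n$. *)

theory Defs
  imports "HOL-Combinatorics.Permutations"
begin

text \<open>Discrete quasi-copulas on L_n = {0..n} are represented as functions
  nat \<Rightarrow> nat \<Rightarrow> nat, normalised to be 0 outside L_n \<times> L_n so that
  extensional equality agrees with equality of maps L_n \<times> L_n \<rightarrow> L_n.\<close>

definition quasi_copulas :: "nat \<Rightarrow> (nat \<Rightarrow> nat \<Rightarrow> nat) set" where
  "quasi_copulas n = {Q.
     (\<forall>i j. (i > n \<or> j > n) \<longrightarrow> Q i j = 0) \<and>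
     (\<forall>i\<in>{0..n}. \<forall>j\<in>{0..n}. Q i j \<in> {0..n}) \<and>
     (\<forall>k\<in>{0..n}. \<exists>i\<in>{0..n}. \<exists>j\<in>{0..n}. Q i j = k) \<and>
     (\<forall>i\<in>{0..n}. Q i 0 = 0 \<and> Q 0 i = 0 \<and> Q i n = i \<and> Q n i = i) \<and>
     (\<forall>i\<in>{0..n}. \<forall>i'\<in>{0..n}. \<forall>j\<in>{0..n}. i \<le> i' \<longrightarrow> Q i j \<le> Q i' j \<and> Q j i \<le> Q j i') \<and>
     (\<forall>i\<in>{0..n}. \<forall>i'\<in>{0..n}. \<forall>j\<in>{0..n}. \<forall>j'\<in>{0..n}.
        i \<le> i' \<and> j \<le> j' \<and> (i \<in> {0, n} \<or> i' \<in> {0, n} \<or> j \<in> {0, n} \<or> j' \<in> {0, n})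
        \<longrightarrow> Q i j + Q i' j' \<ge> Q i j' + Q i' j)}"

definition copulas :: "nat \<Rightarrow> (nat \<Rightarrow> nat \<Rightarrow> nat) set" where
  "copulas n = {Q \<in> quasi_copulas n.
     \<forall>i\<in>{0..n}. \<forall>i'\<in>{0..n}. \<forall>j\<in>{0..n}. \<forall>j'\<in>{0..n}.
        i \<le> i' \<and> j \<le> j' \<longrightarrow> Q i j + Q i' j' \<ge> Q i j' + Q i' j}"

definition qle :: "(nat \<Rightarrow> nat \<Rightarrow> nat) \<Rightarrow> (nat \<Rightarrow> nat \<Rightarrow> nat) \<Rightarrow> bool" where
  "qle P Q \<longleftrightarrow> (\<forall>i j. P i j \<le> Q i j)"

definition Qw :: "nat \<Rightarrow> (nat \<Rightarrow> nat) \<Rightarrow> nat \<Rightarrow> nat \<Rightarrow> nat" where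
  "Qw n w r s = (if r = 0 \<or> s = 0 \<or> r > n \<or> s > n then 0
                 else card {i \<in> {1..r}. w i \<le> s})"

definition is_meet_in :: "'a set \<Rightarrow> ('a \<Rightarrow> 'a \<Rightarrow> bool) \<Rightarrow> 'a \<Rightarrow> 'a \<Rightarrow> 'a \<Rightarrow> bool" where
  "is_meet_in S le z x y \<longleftrightarrow> z \<in> S \<and> le z x \<and> le z y \<and>
     (\<forall>u\<in>S. le u x \<and> le u y \<longrightarrow> le u z)"

definition is_max_in :: "'a set \<Rightarrow> ('a \<Rightarrow> 'a \<Rightarrow> bool) \<Rightarrow> 'a \<Rightarrow> bool" where
  "is_max_in S le z \<longleftrightarrow> z \<in> S \<and> (\<forall>u\<in>S. le u z)"

definition meet_irreducible :: "'a set \<Rightarrow> ('a \<Rightarrow> 'a \<Rightarrow> bool) \<Rightarrow> 'a \<Rightarrow> bool" where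
  "meet_irreducible S le z \<longleftrightarrow> z \<in> S \<and> \<not> is_max_in S le z \<and>
     (\<forall>x\<in>S. \<forall>y\<in>S. is_meet_in S le z x y \<longrightarrow> z = x \<or> z = y)"

definition w4 :: "nat \<Rightarrow> nat \<Rightarrow> nat \<Rightarrow> nat \<Rightarrow> nat \<Rightarrow> nat" where
  "w4 i1 i2 i3 i4 i =
     (if i1 + 1 \<le> i \<and> i \<le> i1 + i2 then i + i3
      else if i1 + i2 + 1 \<le> i \<and> i \<le> i1 + i2 + i3 then i - i2
      else i)"

end

(* For a grid point (a, b) and a value v, greatest_qc_at n a b v is the largest quasi-copula
   whose value at (a, b) is at most v.  Every quasi-copula Q is the pointwise minimum of these
   bounds taken at its own values Q a b, and pointwise minima of quasi-copulas are again
   quasi-copulas; so a meet-irreducible Q is one of the bounds, and it is not the top element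
   min i j.  Conversely a non-top bound is meet-irreducible: if it is the meet of P and R then
   P a b <= v or R a b <= v, hence P or R lies below it.  Finally, the non-top bounds are
   exactly the copulas Q(w) of the permutations w = w(i1, i2, i3, i4), with
   (a, b, v) = (i1 + i2, i1 + i3, i1), as a direct count shows. *)

theory Submission
  imports Defs
begin

lemma quasi_copulasD:
  assumes "Q \<in> quasi_copulas n"
  shows "\<forall>i j. (i > n \<or> j > n) \<longrightarrow> Q i j = 0"
    and "\<forall>i\<in>{0..n}. Q i 0 = 0 \<and> Q 0 i = 0 \<and> Q i n = i \<and> Q n i = i"
    and "\<forall>i\<in>{0..n}. \<forall>i'\<in>{0..n}. \<forall>j\<in>{0..n}. i \<le> i' \<longrightarrow> Q i j \<le> Q i' j \<and> Q j i \<le> Q j i'"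
    and "\<forall>i\<in>{0..n}. \<forall>i'\<in>{0..n}. \<forall>j\<in>{0..n}. \<forall>j'\<in>{0..n}.
        i \<le> i' \<and> j \<le> j' \<and> (i \<in> {0, n} \<or> i' \<in> {0, n} \<or> j \<in> {0, n} \<or> j' \<in> {0, n})
        \<longrightarrow> Q i j + Q i' j' \<ge> Q i j' + Q i' j"
proof -
  note D = assms[unfolded quasi_copulas_def mem_Collect_eq]
  show "\<forall>i j. (i > n \<or> j > n) \<longrightarrow> Q i j = 0" using D by (elim conjE)
  show "\<forall>i\<in>{0..n}. Q i 0 = 0 \<and> Q 0 i = 0 \<and> Q i n = i \<and> Q n i = i" using D by (elim conjE)
  show "\<forall>i\<in>{0..n}. \<forall>i'\<in>{0..n}. \<forall>j\<in>{0..n}. i \<le> i' \<longrightarrow> Q i j \<le> Q i' j \<and> Q j i \<le> Q j i'"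
    using D by (elim conjE)
  show "\<forall>i\<in>{0..n}. \<forall>i'\<in>{0..n}. \<forall>j\<in>{0..n}. \<forall>j'\<in>{0..n}.
        i \<le> i' \<and> j \<le> j' \<and> (i \<in> {0, n} \<or> i' \<in> {0, n} \<or> j \<in> {0, n} \<or> j' \<in> {0, n})
        \<longrightarrow> Q i j + Q i' j' \<ge> Q i j' + Q i' j"
    using D by (elim conjE)
qed

lemma quasi_copula_zero_outside:
  "Q \<in> quasi_copulas n \<Longrightarrow> n < i \<or> n < j \<Longrightarrow> Q i j = 0"
  using quasi_copulasD(1) by blast

lemma quasi_copula_boundary:
  assumes "Q \<in> quasi_copulas n" "i \<le> n"
  shows "Q i 0 = 0" "Q 0 i = 0" "Q i n = i" "Q n i = i"
  using quasi_copulasD(2)[OF assms(1)] assms(2) by auto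

lemma quasi_copula_mono:
  assumes "Q \<in> quasi_copulas n" "i \<le> i'" "j \<le> j'" "i' \<le> n" "j' \<le> n"
  shows "Q i j \<le> Q i' j'"
proof -
  have "Q i j \<le> Q i' j" "Q i' j \<le> Q i' j'"
    using quasi_copulasD(3)[OF assms(1)] assms by auto
  then show ?thesis by linarith
qed

lemma quasi_copula_boundary_rectangle:
  assumes "Q \<in> quasi_copulas n" "i \<le> i'" "j \<le> j'" "i' \<le> n" "j' \<le> n" "i' = n \<or> j' = n"
  shows "Q i j' + Q i' j \<le> Q i j + Q i' j'"
  using quasi_copulasD(4)[OF assms(1)] assms by auto

lemma quasi_copula_lipschitz:
  assumes "Q \<in> quasi_copulas n" "i \<le> i'" "j \<le> j'" "i' \<le> n" "j' \<le> n"
  shows "Q i' j' + i + j \<le> Q i j + i' + j'"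
proof -
  have "Q i' j' + Q n j \<le> Q i' j + Q n j'" "Q i' j + Q i n \<le> Q i j + Q i' n"
    using quasi_copula_boundary_rectangle[OF assms(1), of i' n j j']
      quasi_copula_boundary_rectangle[OF assms(1), of i i' j n] assms by auto
  then show ?thesis
    using quasi_copula_boundary[OF assms(1)] assms by simp
qed

lemma quasi_copula_lower_bound:
  assumes "Q \<in> quasi_copulas n" "i \<le> n" "j \<le> n"
  shows "i + j \<le> Q i j + n"
  using quasi_copula_boundary_rectangle[OF assms(1), of i n j n]
    quasi_copula_boundary[OF assms(1)] assms by simp

lemma quasi_copula_le_min:
  assumes "Q \<in> quasi_copulas n" "i \<le> n" "j \<le> n"
  shows "Q i j \<le> min i j"
  using quasi_copula_mono[OF assms(1), of i n j j] quasi_copula_mono[OF assms(1), of i i j n]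
    quasi_copula_boundary[OF assms(1)] assms by simp

lemma quasi_copulaI:
  assumes zero: "\<And>i j. n < i \<or> n < j \<Longrightarrow> Q i j = 0"
    and boundary: "\<And>i. i \<le> n \<Longrightarrow> Q i 0 = 0 \<and> Q 0 i = 0 \<and> Q i n = i \<and> Q n i = i"
    and mono: "\<And>i i' j j'. i \<le> i' \<Longrightarrow> j \<le> j' \<Longrightarrow> i' \<le> n \<Longrightarrow> j' \<le> n \<Longrightarrow> Q i j \<le> Q i' j'"
    and lipschitz: "\<And>i i' j j'. i \<le> i' \<Longrightarrow> j \<le> j' \<Longrightarrow> i' \<le> n \<Longrightarrow> j' \<le> n \<Longrightarrow>
                      Q i' j' + i + j \<le> Q i j + i' + j'"
  shows "Q \<in> quasi_copulas n"
  unfolding quasi_copulas_def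
proof (intro CollectI conjI ballI allI impI)
  fix i j assume "i \<in> {0..n}" "j \<in> {0..n}"
  then show "Q i j \<in> {0..n}"
    using mono[of i n j n] boundary[of n] by auto
next
  fix k assume "k \<in> {0..n}"
  then show "\<exists>i\<in>{0..n}. \<exists>j\<in>{0..n}. Q i j = k"
    using boundary by (intro bexI[of _ k] bexI[of _ n]) auto
next
  fix i i' j j' assume range: "i \<in> {0..n}" "i' \<in> {0..n}" "j \<in> {0..n}" "j' \<in> {0..n}"
    and rect: "i \<le> i' \<and> j \<le> j' \<and> (i \<in> {0, n} \<or> i' \<in> {0, n} \<or> j \<in> {0, n} \<or> j' \<in> {0, n})"
  then consider "i = 0" | "i' = n" | "j = 0" | "j' = n" by auto
  then show "Q i j' + Q i' j \<le> Q i j + Q i' j'"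
  proof cases
    case 1 then show ?thesis using boundary mono[of i' i' j j'] rect range by auto
  next
    case 2 then show ?thesis using boundary lipschitz[of i i j j'] rect range by auto
  next
    case 3 then show ?thesis using boundary mono[of i i' j' j'] rect range by auto
  next
    case 4 then show ?thesis using boundary lipschitz[of i i' j j] rect range by auto
  qed
qed (use zero boundary mono in auto)

lemma quasi_copulas_min_closed:
  assumes "P \<in> quasi_copulas n" "Q \<in> quasi_copulas n"
  shows "(\<lambda>i j. min (P i j) (Q i j)) \<in> quasi_copulas n"
proof (rule quasi_copulaI)
  fix i i' j j' :: nat assume "i \<le> i'" "j \<le> j'" "i' \<le> n" "j' \<le> n"
  then have "P i' j' + i + j \<le> P i j + i' + j'" "Q i' j' + i + j \<le> Q i j + i' + j'"
    using quasi_copula_lipschitz assms by blast+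
  then show "min (P i' j') (Q i' j') + i + j \<le> min (P i j) (Q i j) + i' + j'"
    by linarith
next
  fix i i' j j' :: nat assume "i \<le> i'" "j \<le> j'" "i' \<le> n" "j' \<le> n"
  then show "min (P i j) (Q i j) \<le> min (P i' j') (Q i' j')"
    using quasi_copula_mono assms by (meson min.mono)
qed (use quasi_copula_zero_outside[OF assms(1)] quasi_copula_zero_outside[OF assms(2)]
      quasi_copula_boundary[OF assms(1)] quasi_copula_boundary[OF assms(2)] in auto)

lemma qle_antisym: "qle P Q \<Longrightarrow> qle Q P \<Longrightarrow> P = Q"
  unfolding qle_def by (intro ext antisym) auto

text \<open>A quasi-copula is non-decreasing and 1-Lipschitz in each argument, so
  Q i j \<le> Q (max i a) (max j b) \<le> Q a b + (i - a) + (j - b); together with Q i j \<le> min i j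
  this bounds every quasi-copula with Q a b \<le> v by the function below.\<close>

definition greatest_qc_at :: "nat \<Rightarrow> nat \<Rightarrow> nat \<Rightarrow> nat \<Rightarrow> nat \<Rightarrow> nat \<Rightarrow> nat" where
  "greatest_qc_at n a b v i j =
     (if i \<le> n \<and> j \<le> n then min (min i j) (v + (i - a) + (j - b)) else 0)"

lemma greatest_qc_at_in_quasi_copulas:
  assumes "a \<le> n" "b \<le> n" "a + b \<le> v + n"
  shows "greatest_qc_at n a b v \<in> quasi_copulas n"
proof (rule quasi_copulaI)
  fix i i' j j' :: nat assume "i \<le> i'" "j \<le> j'" "i' \<le> n" "j' \<le> n"
  then show "greatest_qc_at n a b v i j \<le> greatest_qc_at n a b v i' j'"
    "greatest_qc_at n a b v i' j' + i + j \<le> greatest_qc_at n a b v i j + i' + j'"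
    unfolding greatest_qc_at_def by (auto simp: min_def)
qed (use assms in \<open>auto simp: greatest_qc_at_def min_def\<close>)

lemma qle_greatest_qc_at:
  assumes "Q \<in> quasi_copulas n" "a \<le> n" "b \<le> n" "Q a b \<le> v"
  shows "qle Q (greatest_qc_at n a b v)"
  unfolding qle_def
proof (intro allI)
  fix i j
  show "Q i j \<le> greatest_qc_at n a b v i j"
  proof (cases "i \<le> n \<and> j \<le> n")
    case False
    then show ?thesis using quasi_copula_zero_outside[OF assms(1)] by auto
  next
    case True
    have "Q i j \<le> Q (max i a) (max j b)"
      using quasi_copula_mono[OF assms(1)] True assms by simp
    moreover have "Q (max i a) (max j b) + a + b \<le> Q a b + max i a + max j b"
      using quasi_copula_lipschitz[OF assms(1)] True assms by simp
    ultimately have "Q i j \<le> v + (i - a) + (j - b)"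
      using assms(4) by linarith
    then show ?thesis
      using quasi_copula_le_min[OF assms(1)] True unfolding greatest_qc_at_def by simp
  qed
qed

lemma greatest_qc_at_apply:
  "a \<le> n \<Longrightarrow> b \<le> n \<Longrightarrow> greatest_qc_at n a b v a b = min (min a b) v"
  unfolding greatest_qc_at_def by simp

lemma greatest_qc_at_eq_top:
  assumes "min a b \<le> v"
  shows "greatest_qc_at n a b v = greatest_qc_at n n n n"
proof (intro ext)
  fix i j
  have "min (min i j) (v + (i - a) + (j - b)) = min i j"
    using assms by (cases "a \<le> b"; cases "i \<le> a"; cases "j \<le> b") (auto simp: min_def)
  then show "greatest_qc_at n a b v i j = greatest_qc_at n n n n i j"
    unfolding greatest_qc_at_def by (simp add: min_def)
qed

lemma is_max_in_quasi_copulas: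
  "is_max_in (quasi_copulas n) qle (greatest_qc_at n n n n)"
proof (unfold is_max_in_def, intro conjI ballI)
  show "greatest_qc_at n n n n \<in> quasi_copulas n"
    by (rule greatest_qc_at_in_quasi_copulas) auto
  fix Q assume "Q \<in> quasi_copulas n"
  then show "qle Q (greatest_qc_at n n n n)"
    using quasi_copula_boundary(3)[of Q n n] by (intro qle_greatest_qc_at) auto
qed

lemma meet_irreducible_pointwise_Min:
  assumes irr: "meet_irreducible (quasi_copulas n) qle Q"
    and F: "finite F" "F \<noteq> {}" "F \<subseteq> quasi_copulas n" "\<forall>R\<in>F. qle Q R"
    and Q_eq: "Q = (\<lambda>i j. Min ((\<lambda>R. R i j) ` F))"
  shows "Q \<in> F"
proof -
  define inf_F where "inf_F F = (\<lambda>i j. Min ((\<lambda>R. R i j) ` F))" for F :: "(nat \<Rightarrow> nat \<Rightarrow> nat) set"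
  have "inf_F F \<in> quasi_copulas n \<and> qle Q (inf_F F) \<and> (inf_F F = Q \<longrightarrow> Q \<in> F)"
    using F
  proof (induction F rule: finite_ne_induct)
    case (singleton R)
    then show ?case by (simp add: inf_F_def)
  next
    case (insert R F)
    then have IH: "inf_F F \<in> quasi_copulas n" "qle Q (inf_F F)" "inf_F F = Q \<longrightarrow> Q \<in> F"
      and R: "R \<in> quasi_copulas n" "qle Q R" by auto
    have inf_insert: "inf_F (insert R F) = (\<lambda>i j. min (R i j) (inf_F F i j))"
      unfolding inf_F_def using insert.hyps by (simp add: image_insert)
    have "Q \<in> insert R F" if eq: "inf_F (insert R F) = Q"
    proof -
      have "is_meet_in (quasi_copulas n) qle Q R (inf_F F)"
        using irr IH(2) R(2) unfolding is_meet_in_def meet_irreducible_def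
        by (auto simp: eq[symmetric] inf_insert qle_def)
      then have "Q = R \<or> Q = inf_F F"
        using irr IH(1) R(1) unfolding meet_irreducible_def by blast
      then show ?thesis using IH(3) by auto
    qed
    moreover have "inf_F (insert R F) \<in> quasi_copulas n"
      unfolding inf_insert by (rule quasi_copulas_min_closed[OF R(1) IH(1)])
    moreover have "qle Q (inf_F (insert R F))"
      using IH(2) R(2) unfolding inf_insert qle_def by simp
    ultimately show ?case by blast
  qed
  then show ?thesis using Q_eq unfolding inf_F_def by blast
qed

lemma meet_irreducible_eq_greatest_qc_at:
  assumes Q: "Q \<in> quasi_copulas n" and irr: "meet_irreducible (quasi_copulas n) qle Q"
  obtains a b where "a \<le> n" "b \<le> n" "Q = greatest_qc_at n a b (Q a b)"
proof -
  define bound where "bound p = greatest_qc_at n (fst p) (snd p) (Q (fst p) (snd p))" for p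
  define grid where "grid = {0..n} \<times> {0..n}"
  have bound_apply: "bound (i, j) i j = Q i j" if "i \<le> n" "j \<le> n" for i j
    using quasi_copula_le_min[OF Q that] that unfolding bound_def greatest_qc_at_def by simp
  have bound_outside: "bound (0, 0) i j = Q i j" if "\<not> (i \<le> n \<and> j \<le> n)" for i j
    using quasi_copula_zero_outside[OF Q] that unfolding bound_def greatest_qc_at_def by auto
  have in_qc: "bound ` grid \<subseteq> quasi_copulas n"
    using quasi_copula_lower_bound[OF Q]
    by (auto simp: bound_def grid_def intro!: greatest_qc_at_in_quasi_copulas)
  have above: "\<forall>R\<in>bound ` grid. qle Q R"
    by (auto simp: bound_def grid_def intro!: qle_greatest_qc_at[OF Q])
  have "Q = (\<lambda>i j. Min ((\<lambda>R. R i j) ` bound ` grid))"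
  proof (intro ext antisym)
    fix i j
    show "Q i j \<le> Min ((\<lambda>R. R i j) ` bound ` grid)"
      using above by (auto simp: grid_def qle_def)
    have "(i, j) \<in> grid \<and> bound (i, j) i j = Q i j \<or> (0, 0) \<in> grid \<and> bound (0, 0) i j = Q i j"
      using bound_apply bound_outside unfolding grid_def by auto
    then show "Min ((\<lambda>R. R i j) ` bound ` grid) \<le> Q i j"
      unfolding grid_def by (force intro: Min_le_iff[THEN iffD2])
  qed
  then have "Q \<in> bound ` grid"
    using meet_irreducible_pointwise_Min[OF irr _ _ in_qc above] unfolding grid_def by simp
  then show ?thesis using that unfolding bound_def grid_def by auto
qed

lemma meet_irreducible_greatest_qc_at:
  assumes "a \<le> n" "b \<le> n" "a + b \<le> v + n" "v < min a b"
  shows "meet_irreducible (quasi_copulas n) qle (greatest_qc_at n a b v)"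
  unfolding meet_irreducible_def
proof (intro conjI ballI impI)
  let ?Q = "greatest_qc_at n a b v"
  have Q_ab: "?Q a b = v"
    using greatest_qc_at_apply assms by simp
  show "?Q \<in> quasi_copulas n"
    using greatest_qc_at_in_quasi_copulas assms by simp
  show "\<not> is_max_in (quasi_copulas n) qle ?Q"
  proof
    assume "is_max_in (quasi_copulas n) qle ?Q"
    then have "greatest_qc_at n n n n a b \<le> v"
      using is_max_in_quasi_copulas Q_ab unfolding is_max_in_def qle_def by metis
    then show False
      using assms unfolding greatest_qc_at_def by simp
  qed
  fix P R assume P: "P \<in> quasi_copulas n" and R: "R \<in> quasi_copulas n"
    and meet: "is_meet_in (quasi_copulas n) qle ?Q P R"
  have "qle (\<lambda>i j. min (P i j) (R i j)) ?Q"
    using meet quasi_copulas_min_closed[OF P R] unfolding is_meet_in_def qle_def by auto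
  then have "P a b \<le> v \<or> R a b \<le> v"
    using Q_ab unfolding qle_def by (metis min_le_iff_disj)
  then have "qle P ?Q \<or> qle R ?Q"
    using qle_greatest_qc_at[OF P] qle_greatest_qc_at[OF R] assms by blast
  then show "?Q = P \<or> ?Q = R"
    using meet qle_antisym unfolding is_meet_in_def by blast
qed

lemma meet_irreducible_iff_greatest_qc_at:
  assumes "Q \<in> quasi_copulas n"
  shows "meet_irreducible (quasi_copulas n) qle Q \<longleftrightarrow>
    (\<exists>a b v. a \<le> n \<and> b \<le> n \<and> a + b \<le> v + n \<and> v < min a b \<and> Q = greatest_qc_at n a b v)"
proof
  assume irr: "meet_irreducible (quasi_copulas n) qle Q"
  obtain a b where ab: "a \<le> n" "b \<le> n" and Q_ab: "Q = greatest_qc_at n a b (Q a b)"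
    using meet_irreducible_eq_greatest_qc_at[OF assms irr] .
  define v where "v = Q a b"
  have Q_eq: "Q = greatest_qc_at n a b v"
    using Q_ab unfolding v_def .
  have "v < min a b"
  proof (rule ccontr)
    assume "\<not> v < min a b"
    then have "Q = greatest_qc_at n n n n"
      using Q_eq greatest_qc_at_eq_top[of a b v n] by (metis not_less)
    then show False
      using irr is_max_in_quasi_copulas unfolding meet_irreducible_def by simp
  qed
  moreover have "a + b \<le> v + n"
    using quasi_copula_lower_bound[OF assms ab] unfolding v_def .
  ultimately show "\<exists>a b v. a \<le> n \<and> b \<le> n \<and> a + b \<le> v + n \<and> v < min a b \<and> Q = greatest_qc_at n a b v"
    using ab Q_eq by blast
next
  assume "\<exists>a b v. a \<le> n \<and> b \<le> n \<and> a + b \<le> v + n \<and> v < min a b \<and> Q = greatest_qc_at n a b v"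
  then show "meet_irreducible (quasi_copulas n) qle Q"
    using meet_irreducible_greatest_qc_at by (elim exE conjE) simp
qed

lemma card_atLeastAtMost_Suc_filter:
  "card {k \<in> {1..Suc r}. P k} = card {k \<in> {1..r}. P k} + (if P (Suc r) then 1 else 0)"
proof (cases "P (Suc r)")
  case True
  then have "{k \<in> {1..Suc r}. P k} = insert (Suc r) {k \<in> {1..r}. P k}" by auto
  then show ?thesis using True by simp
next
  case False
  then have "{k \<in> {1..Suc r}. P k} = {k \<in> {1..r}. P k}" using le_Suc_eq by auto
  then show ?thesis using False by simp
qed

lemma w4_count_step:
  assumes "1 \<le> i2" "1 \<le> i3"
  shows "min (min (Suc r) s) (i1 + (Suc r - (i1 + i2)) + (s - (i1 + i3))) =
    min (min r s) (i1 + (r - (i1 + i2)) + (s - (i1 + i3))) +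
    (if w4 i1 i2 i3 i4 (Suc r) \<le> s then 1 else 0)"
proof -
  consider (below) "s \<le> i1 + i3" | (above) t where "s = Suc (i1 + i3 + t)"
    using less_imp_Suc_add[of "i1 + i3" s] by force
  note s_cases = this
  consider "Suc r \<le> i1" | "i1 \<le> r" "r < i1 + i2" | "i1 + i2 \<le> r" "r < i1 + i2 + i3"
    | "i1 + i2 + i3 \<le> r"
    by linarith
  then show ?thesis
  proof cases
    case 1
    then obtain u where "i1 = Suc r + u" by (auto simp: le_iff_add)
    moreover have "w4 i1 i2 i3 i4 (Suc r) = Suc r" using 1 by (simp add: w4_def)
    ultimately show ?thesis by (simp add: min_def)
  next
    case 2
    then obtain u where "r = i1 + u" "u < i2" by (auto simp: le_iff_add)
    moreover have "w4 i1 i2 i3 i4 (Suc r) = Suc r + i3" using 2 by (simp add: w4_def)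
    ultimately show ?thesis using assms by (cases rule: s_cases) (simp_all add: min_def)
  next
    case 3
    then obtain u where "r = i1 + i2 + u" "u < i3" by (auto simp: le_iff_add)
    moreover have "w4 i1 i2 i3 i4 (Suc r) = i1 + Suc u" using calculation by (simp add: w4_def)
    ultimately show ?thesis using assms by (cases rule: s_cases) (simp_all add: min_def)
  next
    case 4
    then obtain u where "r = i1 + i2 + i3 + u" by (auto simp: le_iff_add)
    moreover have "w4 i1 i2 i3 i4 (Suc r) = Suc r" using calculation by (simp add: w4_def)
    ultimately show ?thesis using assms by (cases rule: s_cases) (simp_all add: min_def)
  qed
qed

lemma card_w4_le:
  assumes "1 \<le> i2" "1 \<le> i3"
  shows "card {k \<in> {1..r}. w4 i1 i2 i3 i4 k \<le> s} =
    min (min r s) (i1 + (r - (i1 + i2)) + (s - (i1 + i3)))"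
proof (induction r)
  case (Suc r)
  show ?case
    unfolding card_atLeastAtMost_Suc_filter Suc.IH by (rule w4_count_step[OF assms, symmetric])
qed simp

lemma Qw_w4:
  assumes "n = i1 + i2 + i3 + i4" "1 \<le> i2" "1 \<le> i3"
  shows "Qw n (w4 i1 i2 i3 i4) = greatest_qc_at n (i1 + i2) (i1 + i3) i1"
  using assms card_w4_le[OF assms(2,3)] unfolding Qw_def greatest_qc_at_def by (intro ext) auto

lemma w4_permutes:
  assumes "n = i1 + i2 + i3 + i4"
  shows "w4 i1 i2 i3 i4 permutes {1..n}"
proof (rule bij_imp_permutes)
  have "w4 i1 i3 i2 i4 (w4 i1 i2 i3 i4 x) = x" "w4 i1 i2 i3 i4 (w4 i1 i3 i2 i4 x) = x" for x
    unfolding w4_def by auto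
  then show "bij_betw (w4 i1 i2 i3 i4) {1..n} {1..n}"
    using assms by (intro bij_betw_byWitness[where f' = "w4 i1 i3 i2 i4"]) (auto simp: w4_def)
qed (use assms in \<open>auto simp: w4_def\<close>)

lemma Qw_cong: "(\<And>i. i \<in> {1..n} \<Longrightarrow> w i = w' i) \<Longrightarrow> Qw n w = Qw n w'"
  unfolding Qw_def by (intro ext) (auto intro!: arg_cong[where f = card])

lemma Qw_rectangle_inequality:
  assumes "i \<le> i'" "j \<le> j'" "i' \<le> n" "j' \<le> n"
  shows "Qw n w i j' + Qw n w i' j \<le> Qw n w i j + Qw n w i' j'"
proof -
  define C where "C A s = card {k \<in> A. w k \<le> s}" for A s
  have Qw_C: "Qw n w r s = (if r = 0 \<or> s = 0 then 0 else C {1..r} s)" if "r \<le> n" "s \<le> n" for r s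
    using that unfolding Qw_def C_def by simp
  have C_mono: "C A s \<le> C B s'" if "finite B" "A \<subseteq> B" "s \<le> s'" for A B s s'
    unfolding C_def using that by (intro card_mono) auto
  have C_split: "C {1..i'} s = C {1..i} s + C {Suc i..i'} s" for s
  proof -
    have "{k \<in> {1..i'}. w k \<le> s} = {k \<in> {1..i}. w k \<le> s} \<union> {k \<in> {Suc i..i'}. w k \<le> s}"
      using assms by auto
    moreover have "card ({k \<in> {1..i}. w k \<le> s} \<union> {k \<in> {Suc i..i'}. w k \<le> s}) =
        card {k \<in> {1..i}. w k \<le> s} + card {k \<in> {Suc i..i'}. w k \<le> s}"
      by (rule card_Un_disjoint) auto
    ultimately show ?thesis unfolding C_def by simp
  qed
  have "C {1..i} j' \<le> C {1..i'} j'" "C {1..i'} j \<le> C {1..i'} j'"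
    "C {Suc i..i'} j \<le> C {Suc i..i'} j'"
    using assms by (auto intro: C_mono)
  then show ?thesis
    using assms C_split[of j] C_split[of j'] Qw_C[of i j] Qw_C[of i j'] Qw_C[of i' j] Qw_C[of i' j']
    by (cases "i = 0"; cases "j = 0") auto
qed

lemma Qw_in_copulas:
  "Qw n w \<in> quasi_copulas n \<Longrightarrow> Qw n w \<in> copulas n"
  unfolding copulas_def using Qw_rectangle_inequality by auto

lemma meet_irreducible_iff_Qw_w4:
  assumes "Q \<in> quasi_copulas n"
  shows "meet_irreducible (quasi_copulas n) qle Q \<longleftrightarrow>
    (\<exists>i1 i2 i3 i4. 1 \<le> i2 \<and> 1 \<le> i3 \<and> i1 + i2 + i3 + i4 = n \<and> Q = Qw n (w4 i1 i2 i3 i4))"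
  unfolding meet_irreducible_iff_greatest_qc_at[OF assms]
proof
  assume "\<exists>a b v. a \<le> n \<and> b \<le> n \<and> a + b \<le> v + n \<and> v < min a b \<and> Q = greatest_qc_at n a b v"
  then obtain a b v where "a \<le> n" "b \<le> n" "a + b \<le> v + n" "v < min a b"
    and Q: "Q = greatest_qc_at n a b v" by blast
  define i2 i3 i4 where "i2 = a - v" and "i3 = b - v" and "i4 = n + v - a - b"
  have sums: "n = v + i2 + i3 + i4" "a = v + i2" "b = v + i3" "1 \<le> i2" "1 \<le> i3"
    unfolding i2_def i3_def i4_def using \<open>a \<le> n\<close> \<open>b \<le> n\<close> \<open>a + b \<le> v + n\<close> \<open>v < min a b\<close>
    by auto
  then have "Q = Qw n (w4 v i2 i3 i4)"
    using Q Qw_w4[OF sums(1,4,5)] by simp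
  then show "\<exists>i1 i2 i3 i4. 1 \<le> i2 \<and> 1 \<le> i3 \<and> i1 + i2 + i3 + i4 = n \<and> Q = Qw n (w4 i1 i2 i3 i4)"
    using sums by blast
next
  assume "\<exists>i1 i2 i3 i4. 1 \<le> i2 \<and> 1 \<le> i3 \<and> i1 + i2 + i3 + i4 = n \<and> Q = Qw n (w4 i1 i2 i3 i4)"
  then obtain i1 i2 i3 i4 where "1 \<le> i2" "1 \<le> i3" "n = i1 + i2 + i3 + i4"
    and "Q = Qw n (w4 i1 i2 i3 i4)" by auto
  then have "Q = greatest_qc_at n (i1 + i2) (i1 + i3) i1"
    using Qw_w4 by simp
  then show "\<exists>a b v. a \<le> n \<and> b \<le> n \<and> a + b \<le> v + n \<and> v < min a b \<and> Q = greatest_qc_at n a b v"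
    using \<open>1 \<le> i2\<close> \<open>1 \<le> i3\<close> \<open>n = i1 + i2 + i3 + i4\<close>
    by (intro exI[of _ "i1 + i2"] exI[of _ "i1 + i3"] exI[of _ i1]) simp
qed

theorem mainTheorem5:
  fixes n :: nat and Q :: "nat \<Rightarrow> nat \<Rightarrow> nat"
  assumes "n \<ge> 1" and "Q \<in> quasi_copulas n"
  shows "meet_irreducible (quasi_copulas n) qle Q \<longleftrightarrow>
           (Q \<in> copulas n \<and>
            (\<exists>w. w permutes {1..n} \<and> Q = Qw n w \<and>
               (\<exists>i1 i2 i3 i4 :: nat. i2 \<ge> 1 \<and> i3 \<ge> 1 \<and> i1 + i2 + i3 + i4 = n \<and>
                  (\<forall>i\<in>{1..n}. w i = w4 i1 i2 i3 i4 i))))"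
proof -
  have agree_w4: "(\<exists>w. w permutes {1..n} \<and> Q = Qw n w \<and>
      (\<exists>i1 i2 i3 i4. 1 \<le> i2 \<and> 1 \<le> i3 \<and> i1 + i2 + i3 + i4 = n \<and> (\<forall>i\<in>{1..n}. w i = w4 i1 i2 i3 i4 i)))
    \<longleftrightarrow> (\<exists>i1 i2 i3 i4. 1 \<le> i2 \<and> 1 \<le> i3 \<and> i1 + i2 + i3 + i4 = n \<and> Q = Qw n (w4 i1 i2 i3 i4))"
    using Qw_cong w4_permutes by metis
  show ?thesis
    unfolding meet_irreducible_iff_Qw_w4[OF assms(2)] agree_w4
    using assms(2) Qw_in_copulas by auto
qed

end
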